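(* Let $G$ be a finite simple graph and $m$ a positive integer. The generalized Mycielskian ${\sf M}_m(G)$ is a cover graph if and only if $G$ is bipartite.
   Context: A graph is a cover graph if it is the underlying (undirected) graph of the Hasse diagram of some finite partially ordered set. For a graph $G$ with vertex set $V_0=\{\langle 0,j\rangle : 0\le j\le n-1\}$ and edge set $E_0$, and $m>0$, the generalized Mycielskian ${\sf M}_m(G)$ has vertex set $V_0\cup V_1\cup\cdots\cup V_m\cup\{u\}$ where $V_i=\{\langle i,j\rangle: 0\le j\le n-1\}$, and edge set $E_0\cup E_1\cup\cdots\cup E_m\cup\{\langle m,j\rangle u: 0\le j\le n-1\}$, where $E_i=\{\langle i-1,j\rangle\langle i,k\rangle : \langle 0,j\rangle\langle 0,k\rangle\in E_0\}$ for $1\le i\le m$. *)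

theory Defs
  imports Main
begin

definition simple_graph :: "'a set \<Rightarrow> ('a \<Rightarrow> 'a \<Rightarrow> bool) \<Rightarrow> bool" where
  "simple_graph V E \<longleftrightarrow> finite V \<and> (\<forall>x y. E x y \<longrightarrow> x \<in> V \<and> y \<in> V)
     \<and> (\<forall>x y. E x y \<longrightarrow> E y x) \<and> (\<forall>x. \<not> E x x)"

definition bipartite :: "'a set \<Rightarrow> ('a \<Rightarrow> 'a \<Rightarrow> bool) \<Rightarrow> bool" where
  "bipartite V E \<longleftrightarrow> (\<exists>A. A \<subseteq> V \<and> (\<forall>x y. E x y \<longrightarrow> (x \<in> A \<longleftrightarrow> y \<notin> A)))"

definition partial_order_on_set :: "'a set \<Rightarrow> ('a \<Rightarrow> 'a \<Rightarrow> bool) \<Rightarrow> bool" where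
  "partial_order_on_set V le \<longleftrightarrow> (\<forall>x\<in>V. le x x)
     \<and> (\<forall>x\<in>V. \<forall>y\<in>V. le x y \<and> le y x \<longrightarrow> x = y)
     \<and> (\<forall>x\<in>V. \<forall>y\<in>V. \<forall>z\<in>V. le x y \<and> le y z \<longrightarrow> le x z)"

definition covers :: "'a set \<Rightarrow> ('a \<Rightarrow> 'a \<Rightarrow> bool) \<Rightarrow> 'a \<Rightarrow> 'a \<Rightarrow> bool" where
  "covers V le x y \<longleftrightarrow> x \<in> V \<and> y \<in> V \<and> le x y \<and> x \<noteq> y
     \<and> \<not> (\<exists>z\<in>V. le x z \<and> le z y \<and> z \<noteq> x \<and> z \<noteq> y)"

definition cover_graph :: "'a set \<Rightarrow> ('a \<Rightarrow> 'a \<Rightarrow> bool) \<Rightarrow> bool" where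
  "cover_graph V E \<longleftrightarrow> finite V \<and> (\<exists>le. partial_order_on_set V le \<and>
     (\<forall>x\<in>V. \<forall>y\<in>V. E x y \<longleftrightarrow> covers V le x y \<or> covers V le y x))"

text \<open>Generalized Mycielskian M_m(G): vertex Some (i,v) is \<langle>i,v\<rangle> for 0 \<le> i \<le> m, None is u.\<close>
definition myc_verts :: "'a set \<Rightarrow> nat \<Rightarrow> (nat \<times> 'a) option set" where
  "myc_verts V m = {Some (i, v) | i v. i \<le> m \<and> v \<in> V} \<union> {None}"

fun myc_edge :: "'a set \<Rightarrow> ('a \<Rightarrow> 'a \<Rightarrow> bool) \<Rightarrow> nat \<Rightarrow>
    (nat \<times> 'a) option \<Rightarrow> (nat \<times> 'a) option \<Rightarrow> bool" where
  "myc_edge V E m (Some (i, x)) (Some (j, y)) \<longleftrightarrow>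
     E x y \<and> ((i = 0 \<and> j = 0) \<or> (j = i + 1 \<and> j \<le> m) \<or> (i = j + 1 \<and> i \<le> m))"
| "myc_edge V E m (Some (i, x)) None \<longleftrightarrow> i = m \<and> x \<in> V"
| "myc_edge V E m None (Some (j, y)) \<longleftrightarrow> j = m \<and> y \<in> V"
| "myc_edge V E m None None \<longleftrightarrow> False"

end

theory Submission
  imports Defs
begin

text \<open>
  If \<open>G\<close> is bipartite with parts \<open>A\<close> and \<open>B\<close>, grade \<open>M\<^sub>m(G)\<close> by putting \<open>\<langle>0,a\<rangle>\<close>
  (\<open>a \<in> A\<close>) at height 0, \<open>\<langle>0,b\<rangle>\<close> (\<open>b \<in> B\<close>) at height 1, layer \<open>i \<ge> 1\<close> at height \<open>i + 1\<close> and
  \<open>u\<close> at height \<open>m + 2\<close>, and order the vertices by ascending paths. Every edge ascends;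
  the only edges skipping a height are \<open>\<langle>0,a\<rangle>\<langle>1,b\<rangle>\<close>, and they are still covers because
  no \<open>\<langle>0,b'\<rangle>\<close> is adjacent to \<open>\<langle>1,b\<rangle>\<close>.

  Conversely, in a cover graph every 4-cycle ascends exactly twice, so the signs \<open>\<plusminus>1\<close>
  (up or down) of its edges sum to zero. If \<open>G\<close> is not bipartite it has a closed walk
  \<open>c\<^sub>0, \<dots>, c\<^sub>n\<^sub>-\<^sub>1\<close> of odd length \<open>n\<close>. The 4-cycles
  \<open>\<langle>i,c\<^sub>j\<^sub>+\<^sub>1\<rangle> \<langle>i+1,c\<^sub>j\<^sub>+\<^sub>2\<rangle> \<langle>i+2,c\<^sub>j\<^sub>+\<^sub>1\<rangle> \<langle>i+1,c\<^sub>j\<rangle>\<close> of \<open>M\<^sub>m(G)\<close>, summed over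
  \<open>j\<close>, show that the difference between the sign sums of the two families of diagonal edges
  between layers \<open>i\<close> and \<open>i+1\<close> does not depend on \<open>i\<close>; the 4-cycles through \<open>u\<close> show that it
  vanishes at the top, and those meeting layer 0 in a path \<open>c\<^sub>j c\<^sub>j\<^sub>+\<^sub>1 c\<^sub>j\<^sub>+\<^sub>2\<close> show that at the
  bottom it is twice the sign sum along the walk. But a sum of an odd number of signs is odd.
\<close>

lemma partial_order_on_set_antisym:
  "partial_order_on_set W le \<Longrightarrow> x \<in> W \<Longrightarrow> y \<in> W \<Longrightarrow> le x y \<Longrightarrow> le y x \<Longrightarrow> x = y"
  unfolding partial_order_on_set_def by blast

lemma partial_order_on_set_trans:
  "partial_order_on_set W le \<Longrightarrow> x \<in> W \<Longrightarrow> y \<in> W \<Longrightarrow> z \<in> W \<Longrightarrow> le x y \<Longrightarrow> le y z \<Longrightarrow> le x z"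
  unfolding partial_order_on_set_def by blast

lemma coversD: "covers W le x y \<Longrightarrow> x \<in> W \<and> y \<in> W \<and> le x y \<and> x \<noteq> y"
  unfolding covers_def by blast

lemma covers_no_between:
  "covers W le x y \<Longrightarrow> z \<in> W \<Longrightarrow> le x z \<Longrightarrow> le z y \<Longrightarrow> z \<noteq> x \<Longrightarrow> z \<noteq> y \<Longrightarrow> False"
  unfolding covers_def by blast

lemma covers_asym:
  assumes "partial_order_on_set W le" and "covers W le x y"
  shows "\<not> covers W le y x"
  using assms partial_order_on_set_antisym coversD by metis

lemma covers_square:
  assumes po: "partial_order_on_set W le"
    and ab: "covers W le a b" and bc: "covers W le b c"
    and ad: "covers W le a d \<or> covers W le d a"
    and dc: "covers W le d c \<or> covers W le c d"
  shows "covers W le a d \<and> covers W le d c"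
proof -
  have W: "a \<in> W" "b \<in> W" "c \<in> W" "d \<in> W" using ab bc ad coversD by metis+
  have ac: "le a c" "a \<noteq> c"
    using ab bc coversD partial_order_on_set_trans[OF po] partial_order_on_set_antisym[OF po] W
    by metis+
  have "\<not> covers W le d a"
  proof
    assume da: "covers W le d a"
    show False
    proof (cases "covers W le d c")
      case True
      then show False using covers_no_between[OF True W(1)] da ac coversD by metis
    next
      case False
      then have "le c d" using dc coversD by metis
      then show False
        using da ac coversD W partial_order_on_set_trans[OF po] partial_order_on_set_antisym[OF po]
        by metis
    qed
  qed
  moreover have "\<not> covers W le c d"
  proof
    assume cd: "covers W le c d"
    have "le b d" "b \<noteq> d"
      using bc cd coversD W partial_order_on_set_trans[OF po] partial_order_on_set_antisym[OF po]
      by metis+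
    then show False
      using covers_no_between[of W le a d b] ad \<open>\<not> covers W le d a\<close> ab coversD W by metis
  qed
  ultimately show ?thesis using ad dc by blast
qed

definition cover_sign :: "'a set \<Rightarrow> ('a \<Rightarrow> 'a \<Rightarrow> bool) \<Rightarrow> 'a \<Rightarrow> 'a \<Rightarrow> int" where
  "cover_sign W le x y = (if covers W le x y then 1 else -1)"

lemma cover_sign_swap:
  assumes "partial_order_on_set W le" and "covers W le x y \<or> covers W le y x"
  shows "cover_sign W le y x = - cover_sign W le x y"
  using assms covers_asym unfolding cover_sign_def by fastforce

lemma cover_sign_square:
  assumes po: "partial_order_on_set W le"
    and "covers W le a b \<or> covers W le b a" and "covers W le b c \<or> covers W le c b"
    and "covers W le c d \<or> covers W le d c" and "covers W le d a \<or> covers W le a d"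
  shows "cover_sign W le a b + cover_sign W le b c + cover_sign W le c d + cover_sign W le d a = 0"
  using assms covers_square[OF po, of a b c d] covers_square[OF po, of b c d a]
    covers_square[OF po, of c d a b] covers_square[OF po, of d a b c]
    covers_square[OF po, of c b a d] covers_square[OF po, of d c b a]
    covers_square[OF po, of a d c b] covers_square[OF po, of b a d c]
    covers_asym[OF po, of a b] covers_asym[OF po, of b c]
    covers_asym[OF po, of c d] covers_asym[OF po, of d a]
  unfolding cover_sign_def
  by (cases "covers W le a b"; cases "covers W le b c"; cases "covers W le c d";
      cases "covers W le d a") auto

lemma cover_graph_edge_signs:
  assumes "cover_graph W F"
  obtains s :: "'a \<Rightarrow> 'a \<Rightarrow> int" where "\<And>p q. s p q = 1 \<or> s p q = -1"
    and "\<And>p q. p \<in> W \<Longrightarrow> q \<in> W \<Longrightarrow> F p q \<Longrightarrow> s q p = - s p q"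
    and "\<And>a b c d. a \<in> W \<Longrightarrow> b \<in> W \<Longrightarrow> c \<in> W \<Longrightarrow> d \<in> W \<Longrightarrow>
      F a b \<Longrightarrow> F b c \<Longrightarrow> F c d \<Longrightarrow> F d a \<Longrightarrow> s a b + s b c + s c d + s d a = 0"
proof -
  obtain le where po: "partial_order_on_set W le"
    and adj: "\<And>p q. p \<in> W \<Longrightarrow> q \<in> W \<Longrightarrow> F p q \<Longrightarrow> covers W le p q \<or> covers W le q p"
    using assms unfolding cover_graph_def by blast
  show ?thesis
  proof (rule that[of "cover_sign W le"])
    show "cover_sign W le p q = 1 \<or> cover_sign W le p q = -1" for p q
      unfolding cover_sign_def by simp
    show "cover_sign W le q p = - cover_sign W le p q" if "p \<in> W" "q \<in> W" "F p q" for p q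
      using cover_sign_swap[OF po adj[OF that]] .
    show "cover_sign W le a b + cover_sign W le b c + cover_sign W le c d + cover_sign W le d a = 0"
      if "a \<in> W" "b \<in> W" "c \<in> W" "d \<in> W" "F a b" "F b c" "F c d" "F d a" for a b c d
      using that by (intro cover_sign_square[OF po] adj)
  qed
qed

lemma cover_graph_by_height:
  fixes F :: "'a \<Rightarrow> 'a \<Rightarrow> bool" and h :: "'a \<Rightarrow> nat"
  defines "up \<equiv> \<lambda>p q. F p q \<and> h p < h q"
  assumes fin: "finite W" and in_W: "\<And>p q. F p q \<Longrightarrow> p \<in> W \<and> q \<in> W"
    and sym: "\<And>p q. F p q \<Longrightarrow> F q p" and h_ne: "\<And>p q. F p q \<Longrightarrow> h p \<noteq> h q"
    and no_shortcut: "\<And>p z q. up p z \<Longrightarrow> up\<^sup>+\<^sup>+ z q \<Longrightarrow> \<not> up p q"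
  shows "cover_graph W F"
proof -
  have h_mono: "h p < h q" if "up\<^sup>+\<^sup>+ p q" for p q
    using that by (induction rule: tranclp.induct) (auto simp: up_def)
  have le_iff: "up\<^sup>*\<^sup>* p q \<longleftrightarrow> p = q \<or> up\<^sup>+\<^sup>+ p q" for p q
    by (metis rtranclpD tranclp_into_rtranclp rtranclp.rtrancl_refl)
  have po: "partial_order_on_set W up\<^sup>*\<^sup>*"
    unfolding partial_order_on_set_def
  proof (intro conjI ballI impI)
    show "up\<^sup>*\<^sup>* x x" for x by simp
    show "x = y" if "up\<^sup>*\<^sup>* x y \<and> up\<^sup>*\<^sup>* y x" for x y
      using that h_mono unfolding le_iff by (meson less_asym)
    show "up\<^sup>*\<^sup>* x z" if "up\<^sup>*\<^sup>* x y \<and> up\<^sup>*\<^sup>* y z" for x y z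
      using that by (blast intro: rtranclp_trans)
  qed
  have covers_up: "covers W up\<^sup>*\<^sup>* p q \<longleftrightarrow> up p q" for p q
  proof
    assume pq: "covers W up\<^sup>*\<^sup>* p q"
    then have "up\<^sup>+\<^sup>+ p q" using coversD[OF pq] unfolding le_iff by blast
    then obtain z where z: "up p z" "up\<^sup>*\<^sup>* z q" using tranclpD by metis
    have "z \<in> W" "z \<noteq> p" using z(1) in_W unfolding up_def by auto
    then have "z = q" using covers_no_between[OF pq] z r_into_rtranclp[of up p z] by blast
    with z(1) show "up p q" by simp
  next
    assume pq: "up p q"
    have "\<not> up\<^sup>+\<^sup>+ z q" if pz: "up\<^sup>+\<^sup>+ p z" for z
    proof
      assume "up\<^sup>+\<^sup>+ z q"
      obtain z' where "up p z'" "up\<^sup>*\<^sup>* z' z" using tranclpD[OF pz] by blast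
      then show False using no_shortcut pq rtranclp_tranclp_tranclp \<open>up\<^sup>+\<^sup>+ z q\<close> by metis
    qed
    moreover have "p \<in> W" "q \<in> W" "p \<noteq> q" using pq in_W unfolding up_def by auto
    ultimately show "covers W up\<^sup>*\<^sup>* p q"
      using pq unfolding covers_def le_iff by blast
  qed
  have "F p q \<longleftrightarrow> up p q \<or> up q p" for p q
    using sym h_ne[of p q] unfolding up_def by (auto simp: linorder_neq_iff)
  then have "F p q \<longleftrightarrow> covers W up\<^sup>*\<^sup>* p q \<or> covers W up\<^sup>*\<^sup>* q p" for p q
    unfolding covers_up .
  with fin po show ?thesis unfolding cover_graph_def by blast
qed

inductive walk :: "('a \<Rightarrow> 'a \<Rightarrow> bool) \<Rightarrow> 'a \<Rightarrow> nat \<Rightarrow> 'a \<Rightarrow> bool" for E where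
  walk_refl: "walk E x 0 x"
| walk_snoc: "walk E x k y \<Longrightarrow> E y z \<Longrightarrow> walk E x (Suc k) z"

lemma walk_trans: "walk E y l z \<Longrightarrow> walk E x k y \<Longrightarrow> walk E x (k + l) z"
  by (induction rule: walk.induct) (auto intro: walk_snoc)

lemma walk_Cons:
  assumes "E x y" and "walk E y k z"
  shows "walk E x (Suc k) z"
proof -
  have "walk E x (Suc 0) y" using walk_refl assms(1) by (rule walk_snoc)
  from walk_trans[of E, OF assms(2) this] show ?thesis by simp
qed

lemma walk_sym:
  assumes "\<And>x y. E x y \<Longrightarrow> E y x" and "walk E x k y"
  shows "walk E y k x"
  using assms(2) by (induction rule: walk.induct) (auto intro: walk_refl walk_Cons assms(1))

lemma walk_imp_sequence:
  "walk E x k y \<Longrightarrow> \<exists>c. c 0 = x \<and> c k = y \<and> (\<forall>j<k. E (c j) (c (Suc j)))"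
proof (induction rule: walk.induct)
  case (walk_refl x)
  show ?case by (rule exI[of _ "\<lambda>_. x"]) simp
next
  case (walk_snoc x k y z)
  then obtain c where c: "c 0 = x" "c k = y" "\<forall>j<k. E (c j) (c (Suc j))" by blast
  then have "\<forall>j<Suc k. E ((c(Suc k := z)) j) ((c(Suc k := z)) (Suc j))"
    using walk_snoc.hyps(2) by (auto simp: less_Suc_eq)
  with c show ?case by (intro exI[of _ "c(Suc k := z)"]) simp
qed

lemma bipartite_if_closed_walks_even:
  assumes sym: "\<And>x y. E x y \<Longrightarrow> E y x" and in_V: "\<And>x y. E x y \<Longrightarrow> x \<in> V \<and> y \<in> V"
    and even: "\<And>x n. walk E x n x \<Longrightarrow> even n"
  shows "bipartite V E"
proof -
  define r where "r x = (SOME z. \<exists>k. walk E x k z)" for x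
  have walk_r: "\<exists>k. walk E (r x) k x" for x
  proof -
    have "\<exists>k. walk E x k (r x)"
      unfolding r_def by (rule someI[of _ x]) (auto intro: walk_refl)
    then show ?thesis using walk_sym[of E, OF sym] by blast
  qed
  have r_edge: "r x = r y" if "E x y" for x y
  proof -
    have "(\<exists>k. walk E x k z) \<longleftrightarrow> (\<exists>k. walk E y k z)" for z
      using walk_Cons[of E, OF that] walk_Cons[of E, OF sym[OF that]] by blast
    then show ?thesis unfolding r_def by simp
  qed
  define A where "A = {x \<in> V. \<exists>k. even k \<and> walk E (r x) k x}"
  have "x \<in> A \<longleftrightarrow> y \<notin> A" if e: "E x y" for x y
  proof
    assume "x \<in> A"
    then obtain k where "even k" "walk E (r x) k x" unfolding A_def by blast
    then have k: "even k" "walk E (r y) (Suc k) y"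
      using walk_snoc[of E, OF _ e] r_edge[OF e] by auto
    show "y \<notin> A"
    proof
      assume "y \<in> A"
      then obtain l where "even l" "walk E (r y) l y" unfolding A_def by blast
      then have "walk E y l (r y)" using walk_sym[of E, OF sym] by blast
      from even[OF walk_trans[of E, OF this k(2)]] show False using k(1) \<open>even l\<close> by simp
    qed
  next
    assume "y \<notin> A"
    obtain k where k: "walk E (r x) k x" using walk_r by blast
    have "walk E (r y) (Suc k) y" using walk_snoc[of E, OF k e] r_edge[OF e] by simp
    then have "odd (Suc k)" using \<open>y \<notin> A\<close> in_V[OF e] unfolding A_def by blast
    then show "x \<in> A" using k in_V[OF e] unfolding A_def by auto
  qed
  moreover have "A \<subseteq> V" unfolding A_def by blast
  ultimately show ?thesis unfolding bipartite_def by blast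
qed

lemma odd_closed_walk_if_not_bipartite:
  assumes "simple_graph V E" and "\<not> bipartite V E"
  obtains n and c :: "nat \<Rightarrow> 'a" where "odd n" and "\<And>j. E (c j) (c (Suc j))"
    and "\<And>j. c (j + n) = c j"
proof -
  have "\<not> (\<forall>x n. walk E x n x \<longrightarrow> even n)"
    using assms bipartite_if_closed_walks_even[of E V] unfolding simple_graph_def by blast
  then obtain x n where closed: "walk E x n x" and "odd n" by blast
  then obtain c where c: "c 0 = x" "c n = x" "\<forall>j<n. E (c j) (c (Suc j))"
    using walk_imp_sequence[OF closed] by blast
  have "0 < n" using \<open>odd n\<close> by (cases n) auto
  define c' where "c' j = c (j mod n)" for j
  have "E (c' j) (c' (Suc j))" for j
  proof -
    have "E (c (j mod n)) (c (Suc (j mod n)))" using c(3) \<open>0 < n\<close> by simp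
    then show ?thesis using c(1,2) unfolding c'_def by (auto simp: mod_Suc)
  qed
  moreover have "c' (j + n) = c' j" for j unfolding c'_def by simp
  ultimately show ?thesis using that \<open>odd n\<close> by blast
qed

lemma myc_edge_sym:
  assumes "simple_graph V E" and "myc_edge V E m p q"
  shows "myc_edge V E m q p"
proof -
  have "\<And>x y. E x y \<Longrightarrow> E y x" using assms(1) unfolding simple_graph_def by blast
  then show ?thesis using assms(2) by (cases "(V, E, m, p, q)" rule: myc_edge.cases) auto
qed

lemma myc_edge_in_verts:
  assumes "simple_graph V E" and "myc_edge V E m p q"
  shows "p \<in> myc_verts V m \<and> q \<in> myc_verts V m"
proof -
  have "\<And>x y. E x y \<Longrightarrow> x \<in> V \<and> y \<in> V" using assms(1) unfolding simple_graph_def by blast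
  then show ?thesis
    using assms(2) by (cases "(V, E, m, p, q)" rule: myc_edge.cases) (auto simp: myc_verts_def)
qed

lemma finite_myc_verts: "finite V \<Longrightarrow> finite (myc_verts V m)"
proof -
  assume "finite V"
  have "myc_verts V m = (\<lambda>(i, v). Some (i, v)) ` ({..m} \<times> V) \<union> {None}"
    unfolding myc_verts_def by auto
  with \<open>finite V\<close> show ?thesis by simp
qed

definition myc_height :: "'a set \<Rightarrow> nat \<Rightarrow> (nat \<times> 'a) option \<Rightarrow> nat" where
  "myc_height A m p =
     (case p of None \<Rightarrow> m + 2 | Some (i, x) \<Rightarrow> if i = 0 \<and> x \<in> A then 0 else i + 1)"

lemma myc_height_edge:
  assumes bip: "\<And>x y. E x y \<Longrightarrow> (x \<in> A \<longleftrightarrow> y \<notin> A)" and "0 < m"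
    and e: "myc_edge V E m p q"
  shows "myc_height A m p \<noteq> myc_height A m q
    \<and> (myc_height A m p < myc_height A m q \<longrightarrow> myc_height A m q = Suc (myc_height A m p)
      \<or> (\<exists>a b. p = Some (0, a) \<and> q = Some (1, b) \<and> a \<in> A \<and> b \<notin> A))"
proof (cases "(V, E, m, p, q)" rule: myc_edge.cases)
  case (1 V' E' m' i x j y)
  have "x \<in> A \<longleftrightarrow> y \<notin> A" using bip 1 e by simp
  then show ?thesis using 1 e \<open>0 < m\<close> by (auto simp: myc_height_def)
qed (use e \<open>0 < m\<close> in \<open>auto simp: myc_height_def\<close>)

lemma cover_graph_myc_if_bipartite:
  assumes sg: "simple_graph V E" and m: "0 < m" and "bipartite V E"
  shows "cover_graph (myc_verts V m) (myc_edge V E m)"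
proof -
  obtain A where bip: "\<And>x y. E x y \<Longrightarrow> (x \<in> A \<longleftrightarrow> y \<notin> A)"
    using \<open>bipartite V E\<close> unfolding bipartite_def by blast
  let ?F = "myc_edge V E m" and ?h = "myc_height A m"
  define up where "up = (\<lambda>p q. ?F p q \<and> ?h p < ?h q)"
  note height = myc_height_edge[OF bip m]
  have up_mono: "?h p < ?h q" if "up\<^sup>+\<^sup>+ p q" for p q
    using that by (induction rule: tranclp.induct) (auto simp: up_def)
  have no_shortcut: "\<not> up p q" if pz: "up p z" and zq: "up\<^sup>+\<^sup>+ z q" for p z q
  proof
    assume pq: "up p q"
    have "?h p < ?h z" "?h z < ?h q" using pz up_mono[OF zq] unfolding up_def by auto
    have "?F p q" "?h p < ?h q" using pq unfolding up_def by auto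
    moreover have "?h q \<noteq> Suc (?h p)" using \<open>?h p < ?h z\<close> \<open>?h z < ?h q\<close> by linarith
    ultimately obtain a b where ab: "p = Some (0, a)" "q = Some (1, b)" "a \<in> A" "b \<notin> A"
      using height[where p = p and q = q] by blast
    then have "?h z = 1" using \<open>?h p < ?h z\<close> \<open>?h z < ?h q\<close> by (simp add: myc_height_def)
    have "up z q"
      using zq
    proof (cases rule: tranclp.cases)
      case (trancl_into_trancl w)
      have "?h z < ?h w" "?h w < ?h q" using trancl_into_trancl up_mono unfolding up_def by auto
      then show ?thesis using \<open>?h z = 1\<close> ab by (simp add: myc_height_def)
    qed
    obtain c where "z = Some (0, c)" "c \<notin> A"
      using \<open>?h z = 1\<close> by (cases z) (auto simp: myc_height_def split: if_splits)
    with \<open>up z q\<close> ab have "E c b" unfolding up_def by simp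
    with \<open>c \<notin> A\<close> \<open>b \<notin> A\<close> show False using bip by blast
  qed
  have "finite (myc_verts V m)" using sg finite_myc_verts unfolding simple_graph_def by blast
  from cover_graph_by_height[where h = ?h, OF this myc_edge_in_verts[OF sg] myc_edge_sym[OF sg]
      conjunct1[OF height] no_shortcut[unfolded up_def]]
  show ?thesis .
qed

lemma sum_lessThan_shift_periodic:
  fixes f :: "nat \<Rightarrow> 'b::cancel_comm_monoid_add"
  assumes "f n = f 0"
  shows "(\<Sum>j<n. f (Suc j)) = (\<Sum>j<n. f j)"
proof -
  have "f 0 + (\<Sum>j<n. f (Suc j)) = (\<Sum>j<Suc n. f j)" by (rule sum.lessThan_Suc_shift[symmetric])
  also have "\<dots> = f 0 + (\<Sum>j<n. f j)" using assms by (simp add: add.commute)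
  finally show ?thesis by simp
qed

lemma even_sum_signs_iff:
  fixes f :: "nat \<Rightarrow> int"
  assumes "\<And>j. j < n \<Longrightarrow> f j = 1 \<or> f j = -1"
  shows "even (\<Sum>j<n. f j) \<longleftrightarrow> even n"
  using assms
proof (induction n)
  case (Suc n)
  have "even (\<Sum>j<n. f j) \<longleftrightarrow> even n" using Suc by simp
  moreover have "odd (f n)" using Suc.prems[of n] by auto
  ultimately show ?case by simp
qed simp

text \<open>
  In the application \<open>X i j\<close>, \<open>Y i j\<close>, \<open>T j\<close> and \<open>Z j\<close> are the signs of the edges
  \<open>\<langle>i,c\<^sub>j\<rangle>\<langle>i+1,c\<^sub>j\<^sub>+\<^sub>1\<rangle>\<close>, \<open>\<langle>i,c\<^sub>j\<^sub>+\<^sub>1\<rangle>\<langle>i+1,c\<^sub>j\<rangle>\<close>, \<open>\<langle>m,c\<^sub>j\<rangle>u\<close> and \<open>\<langle>0,c\<^sub>j\<rangle>\<langle>0,c\<^sub>j\<^sub>+\<^sub>1\<rangle>\<close>, with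
  \<open>m = k + 1\<close>, and the hypotheses are the vanishing sign sums of 4-cycles.
\<close>

lemma sum_zero_if_layered_relations:
  fixes X Y :: "nat \<Rightarrow> nat \<Rightarrow> int" and T Z :: "nat \<Rightarrow> int"
  assumes periodic: "\<And>i j. X i (j + n) = X i j" "\<And>i j. Y i (j + n) = Y i j"
      "\<And>j. T (j + n) = T j" "\<And>j. Z (j + n) = Z j"
    and top: "\<And>j. X k (Suc j) + T (Suc (Suc j)) = T j + Y k j"
    and mid: "\<And>i j. i < k \<Longrightarrow> X i (Suc j) + Y (Suc i) (Suc j) = X (Suc i) j + Y i j"
    and bottom: "\<And>j. Z j + Z (Suc j) + Y 0 (Suc j) = X 0 j"
  shows "(\<Sum>j<n. Z j) = 0"
proof -
  have shift: "(\<Sum>j<n. f (Suc j)) = (\<Sum>j<n. f j)" if "\<And>j. f (j + n) = f j" for f :: "nat \<Rightarrow> int"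
    using sum_lessThan_shift_periodic[of f n] that[of 0] by simp
  define D where "D i = (\<Sum>j<n. X i j) - (\<Sum>j<n. Y i j)" for i
  have "(\<Sum>j<n. X k (Suc j)) + (\<Sum>j<n. T (Suc (Suc j))) = (\<Sum>j<n. T j) + (\<Sum>j<n. Y k j)"
    using top by (simp add: sum.distrib[symmetric])
  moreover have "(\<Sum>j<n. T (Suc (Suc j))) = (\<Sum>j<n. T j)"
    using shift[of "\<lambda>j. T (Suc j)"] shift[of T] periodic(3) periodic(3)[of "Suc _"] by simp
  ultimately have "D k = 0" unfolding D_def using shift[of "X k"] periodic by simp
  have D_Suc: "D (Suc i) = D i" if "i < k" for i
  proof -
    have "(\<Sum>j<n. X i (Suc j)) + (\<Sum>j<n. Y (Suc i) (Suc j)) = (\<Sum>j<n. X (Suc i) j) + (\<Sum>j<n. Y i j)"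
      using mid[OF that] by (simp add: sum.distrib[symmetric])
    then show ?thesis unfolding D_def using shift[of "X i"] shift[of "Y (Suc i)"] periodic by simp
  qed
  have "D i = D 0" if "i \<le> k" for i
    using that
  proof (induction i)
    case (Suc i)
    then show ?case using D_Suc[of i] by simp
  qed simp
  with \<open>D k = 0\<close> have "D 0 = 0" by (metis order_refl)
  have "(\<Sum>j<n. X 0 j) = (\<Sum>j<n. Z j) + (\<Sum>j<n. Z (Suc j)) + (\<Sum>j<n. Y 0 (Suc j))"
    by (simp add: bottom[symmetric] sum.distrib)
  then have "2 * (\<Sum>j<n. Z j) = D 0"
    unfolding D_def using shift[of Z] shift[of "Y 0"] periodic by simp
  with \<open>D 0 = 0\<close> show ?thesis by simp
qed

lemma myc_not_cover_graph_if_odd_closed_walk: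
  assumes sg: "simple_graph V E" and m: "0 < m" and "odd n"
    and step: "\<And>j. E (c j) (c (Suc j))" and period: "\<And>j. c (j + n) = c j"
  shows "\<not> cover_graph (myc_verts V m) (myc_edge V E m)"
proof
  let ?F = "myc_edge V E m"
  assume cover: "cover_graph (myc_verts V m) ?F"
  obtain s :: "(nat \<times> 'a) option \<Rightarrow> (nat \<times> 'a) option \<Rightarrow> int"
    where sign: "\<And>p q. s p q = 1 \<or> s p q = -1"
      and swap_W: "\<And>p q. p \<in> myc_verts V m \<Longrightarrow> q \<in> myc_verts V m \<Longrightarrow> ?F p q \<Longrightarrow> s q p = - s p q"
      and square_W: "\<And>a b c d. a \<in> myc_verts V m \<Longrightarrow> b \<in> myc_verts V m \<Longrightarrow> c \<in> myc_verts V m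
        \<Longrightarrow> d \<in> myc_verts V m \<Longrightarrow> ?F a b \<Longrightarrow> ?F b c \<Longrightarrow> ?F c d \<Longrightarrow> ?F d a
        \<Longrightarrow> s a b + s b c + s c d + s d a = 0"
    using cover_graph_edge_signs[OF cover] by blast
  have swap: "s q p = - s p q" if "?F p q" for p q
    using swap_W myc_edge_in_verts[OF sg that] that by blast
  have square: "s a b + s b d + s d e + s e a = 0"
    if "?F a b" "?F b d" "?F d e" "?F e a" for a b d e
    using square_W myc_edge_in_verts[OF sg] that by meson
  have step': "E (c (Suc j)) (c j)" for j using step sg unfolding simple_graph_def by blast
  have in_V: "c j \<in> V" for j using step sg unfolding simple_graph_def by blast
  obtain k where k: "m = Suc k" using m by (cases m) auto
  define X where "X i j = s (Some (i, c j)) (Some (Suc i, c (Suc j)))" for i j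
  define Y where "Y i j = s (Some (i, c (Suc j))) (Some (Suc i, c j))" for i j
  define T where "T j = s (Some (m, c j)) None" for j
  define Z where "Z j = s (Some (0, c j)) (Some (0, c (Suc j)))" for j
  have top: "X k (Suc j) + T (Suc (Suc j)) = T j + Y k j" for j
  proof -
    have "X k (Suc j) + T (Suc (Suc j)) + s None (Some (Suc k, c j))
        + s (Some (Suc k, c j)) (Some (k, c (Suc j))) = 0"
      unfolding X_def T_def k by (rule square) (use step step' in_V k in simp_all)
    moreover have "s None (Some (Suc k, c j)) = - T j"
      unfolding T_def k by (rule swap) (simp add: in_V k)
    moreover have "s (Some (Suc k, c j)) (Some (k, c (Suc j))) = - Y k j"
      unfolding Y_def by (rule swap) (simp add: step' k)
    ultimately show ?thesis by simp
  qed
  have mid: "X i (Suc j) + Y (Suc i) (Suc j) = X (Suc i) j + Y i j" if "i < k" for i j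
  proof -
    have "X i (Suc j) + Y (Suc i) (Suc j) + s (Some (Suc (Suc i), c (Suc j))) (Some (Suc i, c j))
        + s (Some (Suc i, c j)) (Some (i, c (Suc j))) = 0"
      unfolding X_def Y_def by (rule square) (use step step' that k in simp_all)
    moreover have "s (Some (Suc (Suc i), c (Suc j))) (Some (Suc i, c j)) = - X (Suc i) j"
      unfolding X_def by (rule swap) (simp add: step that k Suc_le_eq)
    moreover have "s (Some (Suc i, c j)) (Some (i, c (Suc j))) = - Y i j"
      unfolding Y_def by (rule swap) (simp add: step' that k less_imp_le)
    ultimately show ?thesis by simp
  qed
  have bottom: "Z j + Z (Suc j) + Y 0 (Suc j) = X 0 j" for j
  proof -
    have "Z j + Z (Suc j) + Y 0 (Suc j) + s (Some (Suc 0, c (Suc j))) (Some (0, c j)) = 0"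
      unfolding Z_def Y_def by (rule square) (use step step' k in simp_all)
    moreover have "s (Some (Suc 0, c (Suc j))) (Some (0, c j)) = - X 0 j"
      unfolding X_def by (rule swap) (simp add: step k)
    ultimately show ?thesis by simp
  qed
  have period_Suc: "c (Suc (j + n)) = c (Suc j)" for j using period[of "Suc j"] by simp
  have "(\<Sum>j<n. Z j) = 0"
    by (rule sum_zero_if_layered_relations[of X n Y T Z k, OF _ _ _ _ top mid bottom])
      (simp_all add: X_def Y_def T_def Z_def period period_Suc)
  then have "even (\<Sum>j<n. Z j)" by simp
  moreover have "Z j = 1 \<or> Z j = -1" for j unfolding Z_def by (rule sign)
  ultimately show False using even_sum_signs_iff[of n Z] \<open>odd n\<close> by blast
qed

theorem theorem8:
  fixes V :: "'a set" and E :: "'a \<Rightarrow> 'a \<Rightarrow> bool" and m :: nat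
  assumes "simple_graph V E" and "0 < m"
  shows "cover_graph (myc_verts V m) (myc_edge V E m) \<longleftrightarrow> bipartite V E"
proof
  assume cover: "cover_graph (myc_verts V m) (myc_edge V E m)"
  show "bipartite V E"
  proof (rule ccontr)
    assume "\<not> bipartite V E"
    then obtain c n where odd: "odd n" and step: "\<And>j. E (c j) (c (Suc j))"
      and period: "\<And>j. c (j + n) = c j"
      using odd_closed_walk_if_not_bipartite[OF assms(1)] by blast
    from myc_not_cover_graph_if_odd_closed_walk[where c = c, OF assms odd step period] cover
    show False ..
  qed
next
  assume "bipartite V E"
  then show "cover_graph (myc_verts V m) (myc_edge V E m)"
    by (rule cover_graph_myc_if_bipartite[OF assms])
qed

end
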